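(* Let $G=(V,E)$ be a finite connected graph (with edge weights $w_{xy}>0$ and vertex measure $\mu:V\to(0,\infty)$) which satisfies condition CD$(F;0)$ for some CD-function $F$, and let $\varphi$ be the relaxation function associated with $F$. Suppose $u:[0,\infty)\times V\to(0,\infty)$ is a solution of the heat equation on $G$. Then $$-\Delta(\log u)(t,x)\le\varphi(t)\quad\text{for all }(t,x)\in(0,\infty)\times V,$$ and consequently $$\Psi_\Upsilon(\log u)(t,x)-\partial_t(\log u)(t,x)\le\varphi(t)\quad\text{for all }(t,x)\in(0,\infty)\times V.$$
   Context: Graphs are undirected and locally finite; $x\sim y$ means $xy\in E$; each edge has a weight $w_{xy}=w_{yx}>0$; $\mu:V\to(0,\infty)$. The Laplacian is $\Delta u(x)=\frac1{\mu(x)}\sum_{y\sim x}w_{xy}(u(y)-u(x))$ and $L:=-\Delta$. For $H:\mathbb R\to\mathbb R$ and $v:V\to\mathbb R$, $\Psi_H(v)(x)=\frac1{\mu(x)}\sum_{y\sim x}w_{xy}H(v(y)-v(x))$. Let $\Upsilon(z)=e^z-1-z$, so $\Upsilon'(z)=e^z-1$. A CD-function is a continuous $F:[0,\infty)\to[0,\infty)$ with $F(0)=0$, $x\mapsto F(x)/x$ strictly increasing on $(0,\infty)$, and $\int_1^\infty dr/F(r)<\infty$. Its relaxation function is the unique positive solution $\varphi:(0,\infty)\to(0,\infty)$ of $\dot\varphi(t)+F(\varphi(t))=0$ for $t>0$ with $\varphi(t)\to\infty$ as $t\to0+$. $G$ satisfies CD$(F;0)$ if for every $x\in V$ and every $v:V\to\mathbb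 R$ with $Lv(x)>0$ and $Lv(x)\ge Lv(y)$ for all $y\sim x$, one has $\Delta\Psi_{\Upsilon'}(v)(x)\ge F(Lv(x))$. A solution of the heat equation is a function $u(t,x)$, continuously differentiable in $t$, with $\partial_tu=\Delta u$ on $[0,\infty)\times V$ (time derivative one-sided at $t=0$). *)

theory Defs
  imports "HOL-Analysis.Analysis"
begin

definition weighted_graph :: "('a::finite \<Rightarrow> 'a \<Rightarrow> real) \<Rightarrow> ('a \<Rightarrow> real) \<Rightarrow> bool" where
  "weighted_graph w \<mu> \<longleftrightarrow>
     (\<forall>x y. w x y = w y x) \<and> (\<forall>x y. 0 \<le> w x y) \<and> (\<forall>x. w x x = 0) \<and> (\<forall>x. 0 < \<mu> x)"

definition adj :: "('a \<Rightarrow> 'a \<Rightarrow> real) \<Rightarrow> 'a \<Rightarrow> 'a \<Rightarrow> bool" where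
  "adj w x y \<longleftrightarrow> 0 < w x y"

definition connected_graph :: "('a \<Rightarrow> 'a \<Rightarrow> real) \<Rightarrow> bool" where
  "connected_graph w \<longleftrightarrow> (\<forall>x y. (x, y) \<in> {(a, b). adj w a b}\<^sup>*)"

definition graph_laplacian :: "('a::finite \<Rightarrow> 'a \<Rightarrow> real) \<Rightarrow> ('a \<Rightarrow> real) \<Rightarrow> ('a \<Rightarrow> real) \<Rightarrow> 'a \<Rightarrow> real" where
  "graph_laplacian w \<mu> u x = (1 / \<mu> x) * (\<Sum>y\<in>{y. adj w x y}. w x y * (u y - u x))"

definition Psi :: "('a::finite \<Rightarrow> 'a \<Rightarrow> real) \<Rightarrow> ('a \<Rightarrow> real) \<Rightarrow> (real \<Rightarrow> real) \<Rightarrow> ('a \<Rightarrow> real) \<Rightarrow> 'a \<Rightarrow> real" where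
  "Psi w \<mu> H v x = (1 / \<mu> x) * (\<Sum>y\<in>{y. adj w x y}. w x y * H (v y - v x))"

definition Upsilon :: "real \<Rightarrow> real" where
  "Upsilon z = exp z - 1 - z"

definition Upsilon' :: "real \<Rightarrow> real" where
  "Upsilon' z = exp z - 1"

definition CD_function :: "(real \<Rightarrow> real) \<Rightarrow> bool" where
  "CD_function F \<longleftrightarrow> continuous_on {0..} F \<and> (\<forall>x\<ge>0. 0 \<le> F x) \<and> F 0 = 0 \<and>
     strict_mono_on {0<..} (\<lambda>x. F x / x) \<and> (\<lambda>r. 1 / F r) integrable_on {1..}"

text \<open>phi is the relaxation function of F (positive solution of phi' + F(phi) = 0 on (0,oo),
  blowing up at 0+; it is unique).\<close>
definition relaxation_function :: "(real \<Rightarrow> real) \<Rightarrow> (real \<Rightarrow> real) \<Rightarrow> bool" where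
  "relaxation_function F \<phi> \<longleftrightarrow>
     (\<forall>t>0. 0 < \<phi> t \<and> (\<phi> has_real_derivative - F (\<phi> t)) (at t)) \<and>
     filterlim \<phi> at_top (at_right 0)"

definition CD0 :: "('a::finite \<Rightarrow> 'a \<Rightarrow> real) \<Rightarrow> ('a \<Rightarrow> real) \<Rightarrow> (real \<Rightarrow> real) \<Rightarrow> bool" where
  "CD0 w \<mu> F \<longleftrightarrow> (\<forall>x v.
     0 < - graph_laplacian w \<mu> v x \<and>
     (\<forall>y. adj w x y \<longrightarrow> - graph_laplacian w \<mu> v y \<le> - graph_laplacian w \<mu> v x)
     \<longrightarrow> F (- graph_laplacian w \<mu> v x) \<le> graph_laplacian w \<mu> (Psi w \<mu> Upsilon' v) x)"

text \<open>Solution of the heat equation on [0,oo) x V (one-sided derivative at t = 0).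
  Continuity of the time derivative is automatic, since it equals the Laplacian of u(t).\<close>
definition heat_solution :: "('a::finite \<Rightarrow> 'a \<Rightarrow> real) \<Rightarrow> ('a \<Rightarrow> real) \<Rightarrow> (real \<Rightarrow> 'a \<Rightarrow> real) \<Rightarrow> bool" where
  "heat_solution w \<mu> u \<longleftrightarrow> (\<forall>x. \<forall>t\<ge>0.
     ((\<lambda>s. u s x) has_real_derivative graph_laplacian w \<mu> (u t) x) (at t within {0..}))"

end

theory Submission imports Defs begin

text \<open>For a positive heat solution \<open>\<partial>\<^sub>t log u = \<Delta>u / u = \<Psi>\<^bsub>\<Upsilon>'\<^esub>(log u)\<close>, so \<open>f = -\<Delta> log u\<close>
  satisfies \<open>\<partial>\<^sub>t f = -\<Delta>\<Psi>\<^bsub>\<Upsilon>'\<^esub>(log u)\<close>. As \<open>\<phi>\<close> blows up at \<open>0\<close>, \<open>f\<close> starts below \<open>\<phi>\<close>. If \<open>f - \<phi>\<close>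
  became positive, take a time and vertex where it is maximal on a compact time interval:
  there CD\<open>(F;0)\<close> and the monotonicity of \<open>F\<close> give \<open>\<partial>\<^sub>t f \<le> -F(f) < -F(\<phi>) = \<partial>\<^sub>t \<phi>\<close>, so \<open>f - \<phi>\<close>
  was even larger slightly earlier, a contradiction. The second estimate is the first one
  rewritten with \<open>\<Psi>\<^bsub>\<Upsilon>'\<^esub> = \<Delta> + \<Psi>\<^bsub>\<Upsilon>\<^esub>\<close>.\<close>

lemma heat_solution_has_real_derivative:
  assumes "heat_solution w \<mu> u" and "0 < t"
  shows "((\<lambda>s. u s x) has_real_derivative graph_laplacian w \<mu> (u t) x) (at t)"
proof -
  have "at t within {0..} = at t"
    using \<open>0 < t\<close> by (intro at_within_interior) (simp add: interior_real_atLeast)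
  with assms show ?thesis
    unfolding heat_solution_def by (metis less_imp_le)
qed

lemma heat_solution_tendsto_at_right_0:
  assumes "heat_solution w \<mu> u"
  shows "((\<lambda>s. u s x) \<longlongrightarrow> u 0 x) (at_right 0)"
proof -
  have "continuous (at 0 within {0..}) (\<lambda>s. u s x)"
    using assms unfolding heat_solution_def by (meson DERIV_continuous order_refl)
  then have "((\<lambda>s. u s x) \<longlongrightarrow> u 0 x) (at 0 within {0..})"
    by (simp add: continuous_within)
  then show ?thesis by (rule tendsto_within_subset) auto
qed

lemma has_real_derivative_neg_graph_laplacian:
  assumes "\<And>y. ((\<lambda>s. v s y) has_real_derivative v' y) (at t)"
  shows "((\<lambda>s. - graph_laplacian w \<mu> (v s) x) has_real_derivative - graph_laplacian w \<mu> v' x) (at t)"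
  unfolding graph_laplacian_def by (intro DERIV_minus DERIV_cmult DERIV_sum DERIV_diff assms)

lemma CD_function_strict_mono:
  assumes "CD_function F" and "0 < a" and "a < b"
  shows "F a < F b"
proof -
  have "F a / a < F b / b" and "0 \<le> F a / a"
    using assms unfolding CD_function_def strict_mono_on_def by auto
  have "F a = a * (F a / a)"
    using assms(2) by simp
  also have "\<dots> \<le> b * (F a / a)"
    using \<open>0 \<le> F a / a\<close> assms(3) by (intro mult_right_mono) auto
  also have "\<dots> < b * (F b / b)"
    using \<open>F a / a < F b / b\<close> assms(2,3) by (intro mult_strict_left_mono) auto
  also have "\<dots> = F b"
    using assms(2,3) by simp
  finally show ?thesis .
qed

lemma graph_laplacian_div_eq_Psi_Upsilon'_ln:
  assumes "\<And>z. 0 < v z"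
  shows "graph_laplacian w \<mu> v x / v x = Psi w \<mu> Upsilon' (\<lambda>z. ln (v z)) x"
proof -
  have "v x \<noteq> 0" using assms[of x] by simp
  have "graph_laplacian w \<mu> v x / v x = 1 / \<mu> x * ((\<Sum>y\<in>{y. adj w x y}. w x y * (v y - v x)) / v x)"
    unfolding graph_laplacian_def by simp
  also have "(\<Sum>y\<in>{y. adj w x y}. w x y * (v y - v x)) / v x =
        (\<Sum>y\<in>{y. adj w x y}. w x y * Upsilon' (ln (v y) - ln (v x)))"
    unfolding sum_divide_distrib
    using assms \<open>v x \<noteq> 0\<close> by (intro sum.cong) (auto simp: Upsilon'_def exp_diff field_simps)
  finally show ?thesis unfolding Psi_def .
qed

lemma Psi_Upsilon'_eq_graph_laplacian_add_Psi_Upsilon: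
  "Psi w \<mu> Upsilon' v x = graph_laplacian w \<mu> v x + Psi w \<mu> Upsilon v x"
proof -
  have "(\<Sum>y\<in>{y. adj w x y}. w x y * Upsilon' (v y - v x)) =
        (\<Sum>y\<in>{y. adj w x y}. w x y * (v y - v x) + w x y * Upsilon (v y - v x))"
    by (rule sum.cong) (auto simp: Upsilon_def Upsilon'_def algebra_simps)
  then show ?thesis unfolding Psi_def graph_laplacian_def
    by (simp add: sum.distrib distrib_left)
qed

lemma heat_solution_ln_has_real_derivative:
  assumes "heat_solution w \<mu> u" and "\<And>x. 0 < u t x" and "0 < t"
  shows "((\<lambda>s. ln (u s x)) has_real_derivative Psi w \<mu> Upsilon' (\<lambda>y. ln (u t y)) x) (at t)"
proof -
  have "((\<lambda>s. ln (u s x)) has_real_derivative inverse (u t x) * graph_laplacian w \<mu> (u t) x) (at t)"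
    by (rule DERIV_chain2[OF DERIV_ln heat_solution_has_real_derivative]) (use assms in auto)
  then show ?thesis
    using graph_laplacian_div_eq_Psi_Upsilon'_ln[of "u t", OF assms(2)]
    by (simp add: divide_inverse_commute)
qed

lemma finite_family_attains_sup:
  fixes g :: "'a::finite \<Rightarrow> 'b::topological_space \<Rightarrow> real"
  assumes "compact S" and "S \<noteq> {}" and "\<And>x. continuous_on S (g x)"
  obtains x0 s0 where "s0 \<in> S" and "\<And>x s. s \<in> S \<Longrightarrow> g x s \<le> g x0 s0"
proof -
  obtain T where T: "\<And>x. T x \<in> S" "\<And>x s. s \<in> S \<Longrightarrow> g x s \<le> g x (T x)"
    using continuous_attains_sup[OF assms(1,2) assms(3)] by metis
  define m where "m x = g x (T x)" for x
  have "Max (range m) \<in> range m" by (rule Max_in) auto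
  then obtain x0 where "Max (range m) = m x0" by (rule rangeE)
  then have "m x \<le> m x0" for x
    using Max_ge[of "range m" "m x"] by simp
  then show thesis
    using that[of "T x0" x0] T order_trans unfolding m_def by blast
qed

lemma eventually_all_le_filterlim_at_top:
  fixes f :: "'a::finite \<Rightarrow> 'b \<Rightarrow> real"
  assumes "\<And>x. (f x \<longlongrightarrow> l x) F" and "filterlim \<phi> at_top F"
  shows "\<forall>\<^sub>F s in F. \<forall>x. f x s \<le> \<phi> s"
proof (intro eventually_all_finite)
  fix x
  have "\<forall>\<^sub>F s in F. f x s < l x + 1"
    using assms(1) by (rule order_tendstoD) simp
  moreover have "\<forall>\<^sub>F s in F. l x + 1 \<le> \<phi> s"
    using assms(2) by (simp add: filterlim_at_top)
  ultimately show "\<forall>\<^sub>F s in F. f x s \<le> \<phi> s"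
    by eventually_elim simp
qed

lemma le_barrier_if_max_grows_slower:
  fixes f :: "'a::finite \<Rightarrow> real \<Rightarrow> real" and \<phi> :: "real \<Rightarrow> real"
  assumes f_deriv: "\<And>x t. 0 < t \<Longrightarrow> (f x has_real_derivative f' x t) (at t)"
    and \<phi>_deriv: "\<And>t. 0 < t \<Longrightarrow> (\<phi> has_real_derivative \<phi>' t) (at t)"
    and initially_below: "\<forall>\<^sub>F s in at_right 0. \<forall>x. f x s \<le> \<phi> s"
    and barrier: "\<And>x t. 0 < t \<Longrightarrow> \<phi> t < f x t \<Longrightarrow> (\<And>y. f y t \<le> f x t) \<Longrightarrow> f' x t < \<phi>' t"
    and "0 < t"
  shows "f x t \<le> \<phi> t"
proof (rule ccontr)
  assume above: "\<not> f x t \<le> \<phi> t"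
  have "\<forall>\<^sub>F s in at_right 0. 0 < s \<and> s < t"
    unfolding eventually_at_right_field using \<open>0 < t\<close> by auto
  with initially_below have "\<forall>\<^sub>F s in at_right 0. (\<forall>x. f x s \<le> \<phi> s) \<and> 0 < s \<and> s < t"
    by (rule eventually_conj)
  then obtain a where "\<forall>x. f x a \<le> \<phi> a" and "0 < a" and "a < t"
    using eventually_happens'[OF trivial_limit_at_right_real] by blast
  have cont: "continuous_on {a..t} (\<lambda>s. f y s - \<phi> s)" for y
    using \<open>0 < a\<close> by (intro continuous_at_imp_continuous_on ballI continuous_diff
        DERIV_isCont[OF f_deriv] DERIV_isCont[OF \<phi>_deriv]) auto
  obtain x0 t0 where t0: "t0 \<in> {a..t}"
    and max: "\<And>y s. s \<in> {a..t} \<Longrightarrow> f y s - \<phi> s \<le> f x0 t0 - \<phi> t0"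
  proof (rule finite_family_attains_sup[where g = "\<lambda>y s. f y s - \<phi> s", OF compact_Icc _ cont])
    show "{a..t} \<noteq> {}"
      using \<open>a < t\<close> by simp
  qed (rule that)
  have "\<phi> t0 < f x0 t0"
    using max[of t x] above \<open>a < t\<close> by auto
  with \<open>\<forall>x. f x a \<le> \<phi> a\<close> t0 have "a < t0"
    by (metis atLeastAtMost_iff order_le_less not_le)
  have "f y t0 \<le> f x0 t0" for y
    using max[of t0 y] t0 by simp
  then have "f' x0 t0 - \<phi>' t0 < 0"
    using barrier[of t0 x0] \<open>\<phi> t0 < f x0 t0\<close> \<open>0 < a\<close> \<open>a < t0\<close> by simp
  moreover have "((\<lambda>s. f x0 s - \<phi> s) has_real_derivative f' x0 t0 - \<phi>' t0) (at t0)"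
    using \<open>0 < a\<close> \<open>a < t0\<close> by (intro DERIV_diff f_deriv \<phi>_deriv) auto
  ultimately obtain d where "0 < d"
    and decreasing: "\<And>h. 0 < h \<Longrightarrow> h < d \<Longrightarrow> f x0 t0 - \<phi> t0 < f x0 (t0 - h) - \<phi> (t0 - h)"
    using DERIV_neg_dec_left by blast
  define h where "h = min (d / 2) ((t0 - a) / 2)"
  have "0 < h"
    using \<open>0 < d\<close> \<open>a < t0\<close> unfolding h_def by simp
  moreover have "h \<le> d / 2" and "h \<le> (t0 - a) / 2"
    unfolding h_def by (rule min.cobounded1, rule min.cobounded2)
  ultimately have "0 < h" "h < d" "t0 - h \<in> {a..t}"
    using t0 by auto
  then show False
    using decreasing[of h] max[of "t0 - h" x0] by linarith
qed

lemma deriv_ln_heat_solution: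
  assumes "heat_solution w \<mu> u" and "\<And>x. 0 < u t x" and "0 < t"
  shows "deriv (\<lambda>s. ln (u s x)) t =
    graph_laplacian w \<mu> (\<lambda>y. ln (u t y)) x + Psi w \<mu> Upsilon (\<lambda>y. ln (u t y)) x"
  using DERIV_imp_deriv[OF heat_solution_ln_has_real_derivative[OF assms]]
  by (simp add: Psi_Upsilon'_eq_graph_laplacian_add_Psi_Upsilon)

lemma eventually_neg_graph_laplacian_ln_heat_solution_le:
  assumes "heat_solution w \<mu> u" and "\<forall>t\<ge>0. \<forall>x. 0 < u t x"
    and "filterlim \<phi> at_top (at_right 0)"
  shows "\<forall>\<^sub>F s in at_right 0. \<forall>x. - graph_laplacian w \<mu> (\<lambda>y. ln (u s y)) x \<le> \<phi> s"
proof (rule eventually_all_le_filterlim_at_top[OF _ assms(3)])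
  have "u 0 y \<noteq> 0" for y
    using assms(2)[rule_format, of 0 y] by simp
  then show "((\<lambda>s. - graph_laplacian w \<mu> (\<lambda>y. ln (u s y)) x)
      \<longlongrightarrow> - graph_laplacian w \<mu> (\<lambda>y. ln (u 0 y)) x) (at_right 0)" for x
    unfolding graph_laplacian_def
    by (intro tendsto_intros heat_solution_tendsto_at_right_0[OF assms(1)])
qed

lemma neg_graph_laplacian_ln_heat_solution_le_relaxation:
  assumes "CD_function F" and "CD0 w \<mu> F" and "relaxation_function F \<phi>"
    and "heat_solution w \<mu> u" and "\<forall>t\<ge>0. \<forall>x. 0 < u t x" and "0 < t"
  shows "- graph_laplacian w \<mu> (\<lambda>y. ln (u t y)) x \<le> \<phi> t"
proof -
  have \<phi>: "0 < \<phi> t" "(\<phi> has_real_derivative - F (\<phi> t)) (at t)" if "0 < t" for t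
    using assms(3) that unfolding relaxation_function_def by auto
  have CD: "F (- graph_laplacian w \<mu> v x) \<le> graph_laplacian w \<mu> (Psi w \<mu> Upsilon' v) x"
    if "0 < - graph_laplacian w \<mu> v x" and "\<And>y. - graph_laplacian w \<mu> v y \<le> - graph_laplacian w \<mu> v x"
    for v x
    using assms(2) that unfolding CD0_def by blast
  show ?thesis
  proof (rule le_barrier_if_max_grows_slower
      [where f = "\<lambda>x s. - graph_laplacian w \<mu> (\<lambda>y. ln (u s y)) x"
        and f' = "\<lambda>x t. - graph_laplacian w \<mu> (Psi w \<mu> Upsilon' (\<lambda>y. ln (u t y))) x"
        and \<phi>' = "\<lambda>t. - F (\<phi> t)"])
    show "((\<lambda>s. - graph_laplacian w \<mu> (\<lambda>y. ln (u s y)) x) has_real_derivative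
        - graph_laplacian w \<mu> (Psi w \<mu> Upsilon' (\<lambda>y. ln (u t y))) x) (at t)" if "0 < t" for x t
      using assms(5) that
      by (intro has_real_derivative_neg_graph_laplacian heat_solution_ln_has_real_derivative[OF assms(4)]) auto
    show "\<forall>\<^sub>F s in at_right 0. \<forall>x. - graph_laplacian w \<mu> (\<lambda>y. ln (u s y)) x \<le> \<phi> s"
      using assms(3) unfolding relaxation_function_def
      by (intro eventually_neg_graph_laplacian_ln_heat_solution_le assms(4,5)) blast
    show "- graph_laplacian w \<mu> (Psi w \<mu> Upsilon' (\<lambda>y. ln (u t y))) x < - F (\<phi> t)"
      if "0 < t" and above: "\<phi> t < - graph_laplacian w \<mu> (\<lambda>y. ln (u t y)) x"
        and max: "\<And>y. - graph_laplacian w \<mu> (\<lambda>y. ln (u t y)) y \<le> - graph_laplacian w \<mu> (\<lambda>y. ln (u t y)) x"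
      for x t
    proof -
      have "F (\<phi> t) < F (- graph_laplacian w \<mu> (\<lambda>y. ln (u t y)) x)"
        using CD_function_strict_mono[OF assms(1) \<phi>(1)[OF \<open>0 < t\<close>] above] .
      also have "\<dots> \<le> graph_laplacian w \<mu> (Psi w \<mu> Upsilon' (\<lambda>y. ln (u t y))) x"
        using CD \<phi>(1)[OF \<open>0 < t\<close>] above max by (meson less_trans)
      finally show ?thesis by simp
    qed
  qed (use \<phi>(2) \<open>0 < t\<close> in simp_all)
qed

theorem theorem1p1:
  fixes w :: "'a::finite \<Rightarrow> 'a \<Rightarrow> real" and \<mu> :: "'a \<Rightarrow> real"
    and F \<phi> :: "real \<Rightarrow> real" and u :: "real \<Rightarrow> 'a \<Rightarrow> real"
  assumes "weighted_graph w \<mu>" and "connected_graph w"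
    and "CD_function F" and "CD0 w \<mu> F"
    and "relaxation_function F \<phi>"
    and "heat_solution w \<mu> u" and "\<forall>t\<ge>0. \<forall>x. 0 < u t x"
  shows "(\<forall>t>0. \<forall>x. - graph_laplacian w \<mu> (\<lambda>y. ln (u t y)) x \<le> \<phi> t) \<and>
    (\<forall>t>0. \<forall>x. Psi w \<mu> Upsilon (\<lambda>y. ln (u t y)) x - deriv (\<lambda>s. ln (u s x)) t \<le> \<phi> t)"
proof (intro conjI allI impI)
  fix t :: real and x assume "0 < t"
  show Li_Yau: "- graph_laplacian w \<mu> (\<lambda>y. ln (u t y)) x \<le> \<phi> t"
    using neg_graph_laplacian_ln_heat_solution_le_relaxation[OF assms(3-7) \<open>0 < t\<close>] .
  have "deriv (\<lambda>s. ln (u s x)) t =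
      graph_laplacian w \<mu> (\<lambda>y. ln (u t y)) x + Psi w \<mu> Upsilon (\<lambda>y. ln (u t y)) x"
    using deriv_ln_heat_solution[OF assms(6) _ \<open>0 < t\<close>] assms(7) \<open>0 < t\<close> by simp
  with Li_Yau show "Psi w \<mu> Upsilon (\<lambda>y. ln (u t y)) x - deriv (\<lambda>s. ln (u s x)) t \<le> \<phi> t"
    by simp
qed

end
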